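(* The persistency of entanglement of the $N$-singlet $|S^{(N)}_N\rangle\in(\mathbb{C}^N)^{\otimes N}$ is $N-1$. Equivalently, whatever the choice of single-qudit von Neumann measurements and whatever their outcomes, $N-1$ measurements on distinct qudits are needed to leave the state completely disentangled (fully product).
   Context: The $N$-singlet is the totally antisymmetric state $|S^{(N)}_N\rangle=\frac{1}{\sqrt{N!}}\sum_{\pi\in S_N}\operatorname{sgn}(\pi)|\alpha_{\pi(1)},\dots,\alpha_{\pi(N)}\rangle$ for an orthonormal basis $\{|\alpha_i\rangle\}$ of $\mathbb{C}^N$. The persistency of entanglement of a multipartite pure state is the minimal number of local (single-subsystem) von Neumann measurements that, for all measurement outcomes, leave the state completely disentangled. *)

theory Defs
  imports "HOL-Analysis.Analysis" "HOL-Combinatorics.Permutations"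
begin

text \<open>Pure states of N qudits, each with Hilbert space C^N, are represented by their
  (unnormalised) coefficient functions on the computational product basis.
  A basis index is a list xs of length N with entries in {0..<N};
  xs ! i is the local basis index of qudit i.  Values outside idx N are irrelevant.\<close>

type_synonym qstate = "nat list \<Rightarrow> complex"

definition idx :: "nat \<Rightarrow> nat list set" where
  "idx N = {xs. length xs = N \<and> set xs \<subseteq> {..<N}}"

definition ket :: "nat list \<Rightarrow> qstate" where
  "ket ys = (\<lambda>xs. if xs = ys then 1 else 0)"

text \<open>The N-singlet: (1/sqrt N!) times the sum over permutations pi of {0..<N}
  of sgn(pi) |pi(0),...,pi(N-1)>, written with the computational basis
  as the orthonormal basis alpha.\<close>
definition singlet :: "nat \<Rightarrow> qstate" where
  "singlet N = (\<lambda>xs. complex_of_real (1 / sqrt (fact N)) *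
     (\<Sum>p\<in>{p. p permutes {..<N}}. of_int (sign p) * ket (map p [0..<N]) xs))"

text \<open>An orthonormal basis of C^N: b j is the j-th basis vector (j < N),
  b j i its i-th component.\<close>
definition orthonormal_basis :: "nat \<Rightarrow> (nat \<Rightarrow> nat \<Rightarrow> complex) \<Rightarrow> bool" where
  "orthonormal_basis N b \<longleftrightarrow>
     (\<forall>j<N. \<forall>k<N. (\<Sum>i<N. cnj (b j i) * b k i) = (if j = k then 1 else 0))"

text \<open>Post-measurement (unnormalised) state: the qudits q in M are measured by the
  von Neumann measurement in the orthonormal basis B q, with outcome out q, i.e. the
  rank-one projector |B q (out q)><B q (out q)| acting on qudit q, tensored over q in M,
  applied to psi.\<close>
definition post_measure ::
  "nat \<Rightarrow> nat set \<Rightarrow> (nat \<Rightarrow> nat \<Rightarrow> nat \<Rightarrow> complex) \<Rightarrow> (nat \<Rightarrow> nat) \<Rightarrow> qstate \<Rightarrow> qstate" where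
  "post_measure N M B out psi = (\<lambda>xs.
     \<Sum>ys\<in>{ys\<in>idx N. \<forall>i<N. i \<notin> M \<longrightarrow> ys ! i = xs ! i}.
        (\<Prod>q\<in>M. B q (out q) (xs ! q) * cnj (B q (out q) (ys ! q))) * psi ys)"

definition fully_product :: "nat \<Rightarrow> qstate \<Rightarrow> bool" where
  "fully_product N psi \<longleftrightarrow>
     (\<exists>v :: nat \<Rightarrow> nat \<Rightarrow> complex. \<forall>xs\<in>idx N. psi xs = (\<Prod>i<N. v i (xs ! i)))"

definition nonzero_state :: "nat \<Rightarrow> qstate \<Rightarrow> bool" where
  "nonzero_state N psi \<longleftrightarrow> (\<exists>xs\<in>idx N. psi xs \<noteq> 0)"

definition valid_measurements :: "nat \<Rightarrow> nat set \<Rightarrow> (nat \<Rightarrow> nat \<Rightarrow> nat \<Rightarrow> complex) \<Rightarrow> bool" where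
  "valid_measurements N M B \<longleftrightarrow> M \<subseteq> {..<N} \<and> (\<forall>q\<in>M. orthonormal_basis N (B q))"

definition valid_outcomes :: "nat \<Rightarrow> nat set \<Rightarrow> (nat \<Rightarrow> nat) \<Rightarrow> bool" where
  "valid_outcomes N M out \<longleftrightarrow> (\<forall>q\<in>M. out q < N)"

definition disentangles :: "nat \<Rightarrow> qstate \<Rightarrow> nat set \<Rightarrow> (nat \<Rightarrow> nat \<Rightarrow> nat \<Rightarrow> complex) \<Rightarrow> bool" where
  "disentangles N psi M B \<longleftrightarrow> valid_measurements N M B \<and>
     (\<forall>out. valid_outcomes N M out \<longrightarrow> fully_product N (post_measure N M B out psi))"

definition persistency :: "nat \<Rightarrow> qstate \<Rightarrow> nat" where
  "persistency N psi = (LEAST k. \<exists>M B. card M = k \<and> disentangles N psi M B)"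

end

(* Measuring all qudits but one, in any bases, leaves a product state, because every
   measured qudit is projected onto a fixed vector. If at most N - 2 qudits are measured,
   two unmeasured qudits a and b remain. The singlet is antisymmetric under exchanging
   them, local measurements on the other qudits preserve this antisymmetry, and an
   antisymmetric product state vanishes. Since the post-measurement states of all outcomes
   add up to the singlet, some outcome leaves a nonzero, hence entangled, state. *)

theory Submission
  imports Defs "Jordan_Normal_Form.Determinant"
begin

lemma finite_idx: "finite (idx N)"
proof -
  have "idx N = {xs. set xs \<subseteq> {..<N} \<and> length xs = N}" by (auto simp: idx_def)
  thus ?thesis using finite_lists_length_eq[of "{..<N}" N] by simp
qed

lemma idx_nth_less: "xs \<in> idx N \<Longrightarrow> i < N \<Longrightarrow> xs ! i < N"
  unfolding idx_def by (auto intro: subsetD[OF _ nth_mem])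

lemma nth_permute_list [simp]: "i < length xs \<Longrightarrow> permute_list f xs ! i = xs ! f i"
  by (simp add: permute_list_def)

lemma permute_list_transpose_involutory:
  assumes "a < length xs" "b < length xs"
  shows "permute_list (Transposition.transpose a b) (permute_list (Transposition.transpose a b) xs) = xs"
proof -
  have "Transposition.transpose a b permutes {..<length xs}"
    using assms by (simp add: permutes_swap_id)
  thus ?thesis by (simp flip: permute_list_compose)
qed

lemma permute_list_transpose_idx:
  assumes "xs \<in> idx N" "a < N" "b < N"
  shows "permute_list (Transposition.transpose a b) xs \<in> idx N"
proof -
  have "Transposition.transpose a b permutes {..<length xs}"
    using assms by (simp add: permutes_swap_id idx_def)
  thus ?thesis using assms(1) by (simp add: idx_def)
qed

definition antisymmetric_in :: "nat \<Rightarrow> nat \<Rightarrow> nat \<Rightarrow> qstate \<Rightarrow> bool" where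
  "antisymmetric_in N a b psi \<longleftrightarrow>
     (\<forall>xs\<in>idx N. psi (permute_list (Transposition.transpose a b) xs) = - psi xs)"

lemma antisymmetric_in_fixed_eq_zero:
  assumes "antisymmetric_in N a b psi" "xs \<in> idx N"
    and "permute_list (Transposition.transpose a b) xs = xs"
  shows "psi xs = 0"
proof -
  have "psi xs = - psi xs" using assms by (metis antisymmetric_in_def)
  thus ?thesis by (simp add: equal_neg_zero)
qed

text \<open>If the product state were nonzero at xs, it would have to vanish at the list that
  carries the entry xs ! b at both positions a and b, which is fixed by the swap; this
  kills the factor at position a of the swapped list, contradicting antisymmetry at xs.\<close>
lemma fully_product_antisymmetric_in_eq_zero:
  assumes ab: "a < N" "b < N" "a \<noteq> b"
    and anti: "antisymmetric_in N a b psi" and fp: "fully_product N psi"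
    and xs: "xs \<in> idx N"
  shows "psi xs = 0"
proof (rule ccontr)
  let ?t = "Transposition.transpose a b"
  assume psi_xs: "psi xs \<noteq> 0"
  obtain v where v: "\<And>ys. ys \<in> idx N \<Longrightarrow> psi ys = (\<Prod>i<N. v i (ys ! i))"
    using fp by (auto simp: fully_product_def)
  have len: "length xs = N" using xs by (simp add: idx_def)
  have v_nonzero: "v i (xs ! i) \<noteq> 0" if "i < N" for i
    using psi_xs v[OF xs] that by auto
  define ys where "ys = xs[a := xs ! b]"
  have ys: "ys \<in> idx N"
    using xs ab idx_nth_less[OF xs] unfolding ys_def idx_def
    by (auto dest!: subsetD[OF set_update_subset_insert])
  have "permute_list ?t ys = ys"
    using ab len by (intro nth_equalityI) (auto simp: permute_list_def ys_def Transposition.transpose_def)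
  hence "(\<Prod>i<N. v i (ys ! i)) = 0"
    using antisymmetric_in_fixed_eq_zero[OF anti ys] v[OF ys] by simp
  then obtain i where i: "i < N" "v i (ys ! i) = 0" by auto
  have "i = a"
    using v_nonzero[OF i(1)] i(2) by (cases "i = a") (auto simp: ys_def)
  hence va: "v a (xs ! b) = 0" using i ab len by (simp add: ys_def)
  have "psi (permute_list ?t xs) = (\<Prod>i<N. v i (permute_list ?t xs ! i))"
    using v permute_list_transpose_idx[OF xs ab(1,2)] by simp
  also have "\<dots> = 0"
    using ab len va by (intro prod_zero) (auto intro!: bexI[of _ a] simp: permute_list_def)
  finally show False using anti xs psi_xs by (simp add: antisymmetric_in_def)
qed

lemma ket_permute_list_transpose:
  assumes "a < length xs" "b < length xs"
  shows "ket ys (permute_list (Transposition.transpose a b) xs)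
       = ket (permute_list (Transposition.transpose a b) ys) xs"
proof -
  let ?t = "Transposition.transpose a b"
  have "permute_list ?t xs = ys \<longleftrightarrow> xs = permute_list ?t ys"
    using assms permute_list_transpose_involutory by fastforce
  thus ?thesis by (simp add: ket_def)
qed

lemma antisymmetric_in_singlet:
  assumes ab: "a < N" "b < N" "a \<noteq> b"
  shows "antisymmetric_in N a b (singlet N)"
  unfolding antisymmetric_in_def
proof
  fix xs assume xs: "xs \<in> idx N"
  let ?t = "Transposition.transpose a b"
  let ?P = "{p. p permutes {..<N}}"
  have t: "?t permutes {..<N}" using ab by (simp add: permutes_swap_id)
  have sign_t: "sign (p \<circ> ?t) = - sign p" if "p permutes {..<N}" for p
  proof -
    have "sign (p \<circ> ?t) = sign p * sign ?t"
      using that t by (meson permutes_imp_permutation finite_lessThan sign_compose)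
    thus ?thesis using ab by (simp add: sign_swap_id)
  qed
  have "(\<Sum>p\<in>?P. of_int (sign p) * ket (map p [0..<N]) (permute_list ?t xs))
      = (\<Sum>p\<in>?P. of_int (sign p) * ket (map (p \<circ> ?t) [0..<N]) xs)"
  proof (rule sum.cong[OF refl])
    fix p :: "nat \<Rightarrow> nat"
    have "permute_list ?t (map p [0..<N]) = map (p \<circ> ?t) [0..<N]"
      using ab by (intro nth_equalityI) (simp_all add: permute_list_def Transposition.transpose_def)
    thus "of_int (sign p) * ket (map p [0..<N]) (permute_list ?t xs)
        = of_int (sign p) * ket (map (p \<circ> ?t) [0..<N]) xs"
      using xs ab by (simp add: idx_def ket_permute_list_transpose)
  qed
  also have "\<dots> = (\<Sum>p\<in>?P. - (of_int (sign p) * ket (map p [0..<N]) xs) :: complex)"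
  proof -
    have "p \<circ> ?t \<circ> ?t = p" for p :: "nat \<Rightarrow> nat" by (simp add: comp_assoc)
    moreover have "p \<circ> ?t \<in> ?P" if "p \<in> ?P" for p using that t by (simp add: permutes_compose)
    ultimately show ?thesis
      by (intro sum.reindex_bij_witness[of _ "\<lambda>p. p \<circ> ?t" "\<lambda>p. p \<circ> ?t"]) (simp_all add: sign_t)
  qed
  finally show "singlet N (permute_list ?t xs) = - singlet N xs"
    by (simp add: singlet_def sum_negf)
qed

lemma singlet_nonzero_state: "nonzero_state N (singlet N)"
proof -
  let ?P = "{p. p permutes {..<N}}"
  have ket_id: "ket (map p [0..<N]) [0..<N] = (if p = id then 1 else 0)"
    if "p permutes {..<N}" for p
  proof -
    have "[0..<N] = map p [0..<N] \<longleftrightarrow> p = id"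
    proof
      assume map_p: "[0..<N] = map p [0..<N]"
      have "p i = i" if "i < N" for i
        using that arg_cong[OF map_p, of "\<lambda>l. l ! i"] by simp
      moreover have "p i = i" if "\<not> i < N" for i
        using that \<open>p permutes {..<N}\<close> by (simp add: permutes_def)
      ultimately show "p = id" by (metis eq_id_iff)
    qed simp
    thus ?thesis by (simp add: ket_def)
  qed
  have "(\<Sum>p\<in>?P. of_int (sign p) * ket (map p [0..<N]) [0..<N])
      = (\<Sum>p\<in>?P. if p = id then 1 else 0 :: complex)"
    using ket_id by (intro sum.cong refl) simp
  also have "\<dots> = 1"
    using permutes_id[of "{..<N}"] finite_permutations[of "{..<N}"] by (simp add: sum.delta)
  finally have "singlet N [0..<N] \<noteq> 0" by (simp add: singlet_def)
  moreover have "[0..<N] \<in> idx N" by (auto simp: idx_def)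
  ultimately show ?thesis by (auto simp: nonzero_state_def)
qed

lemma antisymmetric_in_post_measure:
  assumes ab: "a < N" "b < N" "a \<notin> M" "b \<notin> M" and M: "M \<subseteq> {..<N}"
    and anti: "antisymmetric_in N a b psi"
  shows "antisymmetric_in N a b (post_measure N M B out psi)"
  unfolding antisymmetric_in_def
proof
  fix xs assume xs: "xs \<in> idx N"
  let ?t = "Transposition.transpose a b"
  let ?sw = "permute_list ?t"
  define S where "S zs = {ys\<in>idx N. \<forall>i<N. i \<notin> M \<longrightarrow> ys ! i = zs ! i}" for zs
  define w where "w zs ys = (\<Prod>q\<in>M. B q (out q) (zs ! q) * cnj (B q (out q) (ys ! q)))" for zs ys
  have len: "length ys = N" if "ys \<in> idx N" for ys using that by (simp add: idx_def)
  have t_less: "?t i < N" if "i < N" for i using that ab by (simp add: Transposition.transpose_def)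
  have t_notin: "?t i \<notin> M" if "i \<notin> M" for i using that ab by (simp add: Transposition.transpose_def)
  have sw_sw: "?sw (?sw ys) = ys" if "ys \<in> idx N" for ys
    using that ab len permute_list_transpose_involutory by metis
  have sw_idx: "?sw ys \<in> idx N" if "ys \<in> idx N" for ys
    using that ab permute_list_transpose_idx by blast
  have sw_fixes_M: "?sw ys ! q = ys ! q" if "ys \<in> idx N" "q \<in> M" for ys q
  proof -
    have "q < length ys" using that M len by auto
    thus ?thesis using that ab by (auto simp: nth_permute_list Transposition.transpose_def)
  qed
  have sw_S: "?sw ys \<in> S (?sw zs) \<longleftrightarrow> ys \<in> S zs" if "ys \<in> idx N" "zs \<in> idx N" for ys zs
    using that len t_less t_notin sw_idx
    by (auto simp: S_def nth_permute_list) (metis nth_permute_list transpose_involutory)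
  have w_sw: "w (?sw zs) (?sw ys) = w zs ys" if "ys \<in> idx N" "zs \<in> idx N" for ys zs
    using that sw_fixes_M by (simp add: w_def)
  have "post_measure N M B out psi (?sw xs) = (\<Sum>ys\<in>S (?sw xs). w (?sw xs) ys * psi ys)"
    by (simp add: post_measure_def S_def w_def)
  also have "\<dots> = (\<Sum>ys\<in>S xs. - (w xs ys * psi ys))"
  proof (rule sym, rule sum.reindex_bij_witness[of _ ?sw ?sw])
    fix ys assume ys: "ys \<in> S xs"
    hence ys_idx: "ys \<in> idx N" by (simp add: S_def)
    show "?sw (?sw ys) = ys" using sw_sw[OF ys_idx] .
    show "?sw ys \<in> S (?sw xs)" using sw_S[OF ys_idx xs] ys by simp
    show "w (?sw xs) (?sw ys) * psi (?sw ys) = - (w xs ys * psi ys)"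
      using w_sw[OF ys_idx xs] anti ys_idx by (simp add: antisymmetric_in_def)
  next
    fix ys assume ys: "ys \<in> S (?sw xs)"
    hence ys_idx: "ys \<in> idx N" by (simp add: S_def)
    show "?sw (?sw ys) = ys" using sw_sw[OF ys_idx] .
    show "?sw ys \<in> S xs" using sw_S[OF sw_idx[OF ys_idx] xs] ys sw_sw[OF ys_idx] by simp
  qed
  also have "\<dots> = - post_measure N M B out psi xs"
    by (simp add: post_measure_def S_def w_def sum_negf)
  finally show "post_measure N M B out psi (?sw xs) = - post_measure N M B out psi xs" .
qed

text \<open>Each measured qudit q contributes the factor B q (out q) (xs ! q); the rest depends
  on xs ! r only.\<close>
lemma fully_product_post_measure_all_but_one:
  assumes r: "r < N"
  shows "fully_product N (post_measure N ({..<N} - {r}) B out psi)"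
  unfolding fully_product_def
proof (intro exI ballI)
  let ?M = "{..<N} - {r}"
  define g where "g z = (\<Sum>ys\<in>{ys\<in>idx N. ys ! r = z}.
                          (\<Prod>q\<in>?M. cnj (B q (out q) (ys ! q))) * psi ys)" for z
  define v where "v i z = (if i = r then g z else B i (out i) z)" for i z
  fix xs assume xs: "xs \<in> idx N"
  have S: "{ys\<in>idx N. \<forall>i<N. i \<notin> ?M \<longrightarrow> ys ! i = xs ! i} = {ys\<in>idx N. ys ! r = xs ! r}"
    using r by auto
  have "post_measure N ?M B out psi xs
      = (\<Sum>ys\<in>{ys\<in>idx N. ys ! r = xs ! r}. (\<Prod>q\<in>?M. B q (out q) (xs ! q))
           * ((\<Prod>q\<in>?M. cnj (B q (out q) (ys ! q))) * psi ys))"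
    unfolding post_measure_def S by (simp add: prod.distrib mult.assoc)
  also have "\<dots> = (\<Prod>q\<in>?M. B q (out q) (xs ! q)) * g (xs ! r)"
    by (simp add: g_def sum_distrib_left)
  also have "\<dots> = v r (xs ! r) * (\<Prod>i\<in>?M. v i (xs ! i))"
    by (simp add: v_def)
  also have "\<dots> = (\<Prod>i<N. v i (xs ! i))"
    using r by (simp add: prod.remove[of "{..<N}" r])
  finally show "post_measure N ?M B out psi xs = (\<Prod>i<N. v i (xs ! i))" .
qed

lemma orthonormal_basis_standard: "orthonormal_basis N (\<lambda>j i. if i = j then 1 else 0)"
proof -
  have "(\<Sum>i<N. cnj (if i = j then 1 else 0) * (if i = k then 1 else 0))
      = (if j = k then 1 else (0::complex))" if "j < N" for j k
  proof -
    have "(\<Sum>i<N. cnj (if i = j then 1 else 0) * (if i = k then 1 else 0))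
        = (\<Sum>i<N. if i = j then (if j = k then 1 else 0) else (0::complex))"
      by (rule sum.cong) auto
    thus ?thesis using that by simp
  qed
  thus ?thesis by (simp add: orthonormal_basis_def)
qed

text \<open>A one-sided inverse of a square matrix is two-sided, so orthonormal rows force
  orthonormal columns.\<close>
lemma orthonormal_basis_columns:
  assumes ob: "orthonormal_basis N b" and xy: "x < N" "y < N"
  shows "(\<Sum>j<N. b j x * cnj (b j y)) = (if x = y then 1 else 0)"
proof -
  define A :: "complex mat" where "A = Matrix.mat N N (\<lambda>(j, i). cnj (b j i))"
  define C :: "complex mat" where "C = Matrix.mat N N (\<lambda>(i, k). b k i)"
  have A: "A \<in> carrier_mat N N" and C: "C \<in> carrier_mat N N" by (auto simp: A_def C_def)
  have "A * C = 1\<^sub>m N"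
  proof (rule eq_matI)
    fix j k assume jk: "j < dim_row (1\<^sub>m N)" "k < dim_col (1\<^sub>m N)"
    hence "(A * C) $$ (j, k) = (\<Sum>i<N. cnj (b j i) * b k i)"
      by (simp add: A_def C_def scalar_prod_def lessThan_atLeast0)
    also have "\<dots> = 1\<^sub>m N $$ (j, k)" using ob jk by (simp add: orthonormal_basis_def)
    finally show "(A * C) $$ (j, k) = 1\<^sub>m N $$ (j, k)" .
  qed (auto simp: A_def C_def)
  hence "C * A = 1\<^sub>m N" using mat_mult_left_right_inverse[OF A C] by simp
  moreover have "(\<Sum>j<N. b j x * cnj (b j y)) = (C * A) $$ (x, y)"
    using xy by (simp add: A_def C_def scalar_prod_def lessThan_atLeast0)
  ultimately show ?thesis using xy by simp
qed

lemma sum_post_measure_outcomes: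
  assumes vm: "valid_measurements N M B" and xs: "xs \<in> idx N"
  shows "(\<Sum>out\<in>PiE M (\<lambda>_. {..<N}). post_measure N M B out psi xs) = psi xs"
proof -
  define S where "S = {ys\<in>idx N. \<forall>i<N. i \<notin> M \<longrightarrow> ys ! i = xs ! i}"
  define f where "f q j ys = B q j (xs ! q) * cnj (B q j (ys ! q))" for q j ys
  have M: "M \<subseteq> {..<N}" and ob: "\<And>q. q \<in> M \<Longrightarrow> orthonormal_basis N (B q)"
    using vm by (auto simp: valid_measurements_def)
  have fin_M: "finite M" using M finite_subset by blast
  have sum_f: "(\<Prod>q\<in>M. \<Sum>j<N. f q j ys) = (if ys = xs then 1 else 0)" if ys: "ys \<in> S" for ys
  proof -
    have ys_idx: "ys \<in> idx N" using ys by (simp add: S_def)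
    have "(\<Prod>q\<in>M. \<Sum>j<N. f q j ys) = (\<Prod>q\<in>M. if xs ! q = ys ! q then 1 else 0)"
      using M ob idx_nth_less[OF xs] idx_nth_less[OF ys_idx]
      by (intro prod.cong refl) (auto simp: f_def orthonormal_basis_columns)
    moreover have "ys = xs \<longleftrightarrow> (\<forall>q\<in>M. xs ! q = ys ! q)"
      using ys xs unfolding S_def idx_def by (auto intro!: nth_equalityI)
    ultimately show ?thesis using fin_M by (auto intro: prod_zero)
  qed
  have "(\<Sum>out\<in>PiE M (\<lambda>_. {..<N}). post_measure N M B out psi xs)
     = (\<Sum>ys\<in>S. \<Sum>out\<in>PiE M (\<lambda>_. {..<N}). (\<Prod>q\<in>M. f q (out q) ys) * psi ys)"
    unfolding post_measure_def S_def f_def by (rule sum.swap)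
  also have "\<dots> = (\<Sum>ys\<in>S. (\<Prod>q\<in>M. \<Sum>j<N. f q j ys) * psi ys)"
    by (simp add: sum_distrib_right prod_sum_PiE[OF fin_M])
  also have "\<dots> = (\<Sum>ys\<in>S. if ys = xs then psi xs else 0)"
    using sum_f by (intro sum.cong) auto
  also have "\<dots> = psi xs"
    using finite_idx xs by (simp add: S_def)
  finally show ?thesis .
qed

lemma ex_outcome_post_measure_nonzero_state:
  assumes "valid_measurements N M B" "nonzero_state N psi"
  obtains out where "valid_outcomes N M out" "nonzero_state N (post_measure N M B out psi)"
proof -
  obtain xs where xs: "xs \<in> idx N" "psi xs \<noteq> 0"
    using assms(2) by (auto simp: nonzero_state_def)
  then obtain out where "out \<in> PiE M (\<lambda>_. {..<N})" "post_measure N M B out psi xs \<noteq> 0"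
    using sum_post_measure_outcomes[OF assms(1) xs(1), of psi] sum.neutral by force
  thus ?thesis using that xs(1) by (auto simp: valid_outcomes_def nonzero_state_def)
qed

lemma not_fully_product_post_measure_singlet:
  assumes vm: "valid_measurements N M B" and card_M: "card M < N - 1"
    and nz: "nonzero_state N (post_measure N M B out (singlet N))"
  shows "\<not> fully_product N (post_measure N M B out (singlet N))"
proof
  assume fp: "fully_product N (post_measure N M B out (singlet N))"
  have M: "M \<subseteq> {..<N}" using vm by (simp add: valid_measurements_def)
  hence "card ({..<N} - M) = N - card M" by (simp add: card_Diff_subset finite_subset)
  hence "\<not> card ({..<N} - M) \<le> Suc 0" using card_M by simp
  then obtain a b where ab: "a \<in> {..<N} - M" "b \<in> {..<N} - M" "a \<noteq> b"
    using card_le_Suc0_iff_eq[of "{..<N} - M"] by auto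
  have "antisymmetric_in N a b (post_measure N M B out (singlet N))"
    using ab M by (intro antisymmetric_in_post_measure antisymmetric_in_singlet) auto
  hence "post_measure N M B out (singlet N) xs = 0" if "xs \<in> idx N" for xs
    using ab fp that by (intro fully_product_antisymmetric_in_eq_zero[of a N b]) auto
  thus False using nz by (simp add: nonzero_state_def)
qed

lemma persistency_singlet:
  assumes "N > 0"
  shows "persistency N (singlet N) = N - 1"
  unfolding persistency_def
proof (rule Least_equality)
  let ?M = "{..<N} - {N - 1}"
  let ?B = "\<lambda>q j i. if i = j then 1 else 0 :: complex"
  have "disentangles N (singlet N) ?M ?B"
    using assms orthonormal_basis_standard fully_product_post_measure_all_but_one[of "N - 1"]
    by (simp add: disentangles_def valid_measurements_def)
  moreover have "card ?M = N - 1" using assms by simp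
  ultimately show "\<exists>M B. card M = N - 1 \<and> disentangles N (singlet N) M B" by blast
next
  fix k assume "\<exists>M B. card M = k \<and> disentangles N (singlet N) M B"
  then obtain M B where k: "card M = k" and d: "disentangles N (singlet N) M B" by blast
  have vm: "valid_measurements N M B" using d by (simp add: disentangles_def)
  obtain out where "valid_outcomes N M out"
    and nz: "nonzero_state N (post_measure N M B out (singlet N))"
    using ex_outcome_post_measure_nonzero_state[OF vm singlet_nonzero_state] .
  hence "fully_product N (post_measure N M B out (singlet N))"
    using d by (simp add: disentangles_def)
  thus "N - 1 \<le> k" using not_fully_product_post_measure_singlet[OF vm _ nz] k by linarith
qed

theorem mainTheorem7:
  fixes N :: nat
  assumes "N \<ge> 2"
  shows "persistency N (singlet N) = N - 1
    \<and> (\<forall>M B out. valid_measurements N M B \<and> card M < N - 1 \<and> valid_outcomes N M out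
          \<and> nonzero_state N (post_measure N M B out (singlet N))
          \<longrightarrow> \<not> fully_product N (post_measure N M B out (singlet N)))"
  using assms persistency_singlet not_fully_product_post_measure_singlet by auto

end
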